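(* Let $(\Sigma_+,\Sigma_-,N_1,N_2,N_3)$ be a solution of the Wainwright–Hsu system satisfying the constraint, with $N_1=0$ and $N_2,N_3>0$. Then there is a constant $c>0$ such that $N_2(\tau)N_3(\tau)\geq c$ for all $\tau\in[0,\infty)$.
   Context: Wainwright–Hsu system: for functions $N_1,N_2,N_3,\Sigma_+,\Sigma_-$ of $\tau\in\mathbb{R}$ (prime denotes $d/d\tau$), $N_1'=(q-4\Sigma_+)N_1$, $N_2'=(q+2\Sigma_++2\sqrt3\Sigma_-)N_2$, $N_3'=(q+2\Sigma_+-2\sqrt3\Sigma_-)N_3$, $\Sigma_+'=-(2-q)\Sigma_+-3S_+$, $\Sigma_-'=-(2-q)\Sigma_--3S_-$, where $q=2(\Sigma_+^2+\Sigma_-^2)$, $S_+=\frac12[(N_2-N_3)^2-N_1(2N_1-N_2-N_3)]$, $S_-=\frac{\sqrt3}{2}(N_3-N_2)(N_1-N_2-N_3)$, together with the constraint $\Sigma_+^2+\Sigma_-^2+\frac34[N_1^2+N_2^2+N_3^2-2(N_1N_2+N_2N_3+N_1N_3)]=1$. Solutions exist for all $\tau\in\mathbb{R}$. *)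

theory Defs
  imports "HOL-Analysis.Analysis"
begin

definition WH_q :: "real \<Rightarrow> real \<Rightarrow> real" where
  "WH_q Sp Sm = 2 * (Sp\<^sup>2 + Sm\<^sup>2)"

definition WH_Sp :: "real \<Rightarrow> real \<Rightarrow> real \<Rightarrow> real" where
  "WH_Sp n1 n2 n3 = (1/2) * ((n2 - n3)\<^sup>2 - n1 * (2 * n1 - n2 - n3))"

definition WH_Sm :: "real \<Rightarrow> real \<Rightarrow> real \<Rightarrow> real" where
  "WH_Sm n1 n2 n3 = (sqrt 3 / 2) * (n3 - n2) * (n1 - n2 - n3)"

definition WH_constraint :: "real \<Rightarrow> real \<Rightarrow> real \<Rightarrow> real \<Rightarrow> real \<Rightarrow> bool" where
  "WH_constraint n1 n2 n3 sp sm \<longleftrightarrow>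
     sp\<^sup>2 + sm\<^sup>2 + (3/4) * (n1\<^sup>2 + n2\<^sup>2 + n3\<^sup>2 - 2 * (n1 * n2 + n2 * n3 + n1 * n3)) = 1"

definition WH_solution ::
  "(real \<Rightarrow> real) \<Rightarrow> (real \<Rightarrow> real) \<Rightarrow> (real \<Rightarrow> real) \<Rightarrow> (real \<Rightarrow> real) \<Rightarrow> (real \<Rightarrow> real) \<Rightarrow> bool" where
  "WH_solution N1 N2 N3 Sp Sm \<longleftrightarrow>
    (\<forall>t. (N1 has_real_derivative ((WH_q (Sp t) (Sm t) - 4 * Sp t) * N1 t)) (at t)
       \<and> (N2 has_real_derivative ((WH_q (Sp t) (Sm t) + 2 * Sp t + 2 * sqrt 3 * Sm t) * N2 t)) (at t)
       \<and> (N3 has_real_derivative ((WH_q (Sp t) (Sm t) + 2 * Sp t - 2 * sqrt 3 * Sm t) * N3 t)) (at t)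
       \<and> (Sp has_real_derivative (- (2 - WH_q (Sp t) (Sm t)) * Sp t - 3 * WH_Sp (N1 t) (N2 t) (N3 t))) (at t)
       \<and> (Sm has_real_derivative (- (2 - WH_q (Sp t) (Sm t)) * Sm t - 3 * WH_Sm (N1 t) (N2 t) (N3 t))) (at t)
       \<and> WH_constraint (N1 t) (N2 t) (N3 t) (Sp t) (Sm t))"

end

theory Submission
  imports Defs
begin

text \<open>
  With \<open>N\<^sub>1 = 0\<close> the constraint turns the \<open>\<Sigma>\<^sub>+\<close> equation into
  \<open>(1 + \<Sigma>\<^sub>+)' = -(2 - q)(1 + \<Sigma>\<^sub>+)\<close>, and \<open>(ln N\<^sub>2N\<^sub>3)' = 2q + 4\<Sigma>\<^sub>+\<close>.
  Put \<open>\<rho> = (N\<^sub>2 - N\<^sub>3)/(N\<^sub>2 + N\<^sub>3)\<close>. Using the constraint once more, the function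
  \<open>ln N\<^sub>2N\<^sub>3 - \<Sigma>\<^sub>-\<rho>/\<surd>3 - 2\<surd>(1 + \<Sigma>\<^sub>+)\<close> has derivative
  \<open>2(1 + \<Sigma>\<^sub>+)\<^sup>2 + 2(\<Sigma>\<^sub>-\<rho>)\<^sup>2 + (2 - q)(\<Sigma>\<^sub>-\<rho>/\<surd>3 + \<surd>(1 + \<Sigma>\<^sub>+))\<close>,
  which is nonnegative because \<open>|\<rho>| \<le> 1\<close> and \<open>\<Sigma>\<^sub>-\<^sup>2 \<le> 2(1 + \<Sigma>\<^sub>+)\<close>.
  The two correction terms are bounded, so \<open>ln N\<^sub>2N\<^sub>3\<close> is bounded below on \<open>[0, \<infinity>)\<close>.
  This needs \<open>1 + \<Sigma>\<^sub>+ > 0\<close>, which persists forward in time; in the remaining case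
  \<open>\<Sigma>\<^sub>+ = -1\<close>, \<open>\<Sigma>\<^sub>- = 0\<close> for all \<open>t \<ge> 0\<close> and \<open>N\<^sub>2N\<^sub>3\<close> is constant.
\<close>

lemma nonneg_linear_ode_exp_lower_bound:
  fixes f a :: "real \<Rightarrow> real" and K t :: real
  assumes deriv: "\<And>s. (f has_real_derivative a s * f s) (at s)"
    and nonneg: "\<And>s. 0 \<le> f s"
    and lower: "\<And>s. - K \<le> a s"
    and "0 \<le> t"
  shows "f 0 * exp (- K * t) \<le> f t"
proof -
  have "f 0 * exp (K * 0) \<le> f t * exp (K * t)"
  proof (rule DERIV_nonneg_imp_nondecreasing[OF \<open>0 \<le> t\<close>])
    fix s
    have "((\<lambda>s. f s * exp (K * s)) has_real_derivative (a s + K) * (f s * exp (K * s))) (at s)"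
      by (rule derivative_eq_intros deriv refl | simp add: algebra_simps)+
    moreover have "0 \<le> (a s + K) * (f s * exp (K * s))"
      using lower[of s] nonneg[of s] by simp
    ultimately show "\<exists>y. ((\<lambda>s. f s * exp (K * s)) has_real_derivative y) (at s) \<and> 0 \<le> y"
      by blast
  qed
  then show ?thesis
    by (simp add: exp_minus field_simps)
qed

lemma diff_over_sum_deriv:
  fixes a b :: "real \<Rightarrow> real"
  assumes a: "(a has_real_derivative (u + v) * a t) (at t)"
    and b: "(b has_real_derivative (u - v) * b t) (at t)"
    and ne: "a t + b t \<noteq> 0"
  shows "((\<lambda>t. (a t - b t) / (a t + b t)) has_real_derivative
           v * (1 - ((a t - b t) / (a t + b t))\<^sup>2)) (at t)"
  by (rule DERIV_cong[OF DERIV_divide[OF DERIV_diff[OF a b] DERIV_add[OF a b] ne]])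
    (use ne in \<open>simp add: divide_simps power2_eq_square, algebra\<close>)

locale WH_type_VII0 =
  fixes N2 N3 Sp Sm :: "real \<Rightarrow> real"
  assumes solution: "WH_solution (\<lambda>_. 0) N2 N3 Sp Sm"
    and N2_pos: "0 < N2 t"
    and N3_pos: "0 < N3 t"
begin

abbreviation q :: "real \<Rightarrow> real" where
  "q t \<equiv> WH_q (Sp t) (Sm t)"

definition rho :: "real \<Rightarrow> real" where
  "rho t = (N2 t - N3 t) / (N2 t + N3 t)"

lemma constraint: "(Sp t)\<^sup>2 + (Sm t)\<^sup>2 + 3/4 * (N2 t - N3 t)\<^sup>2 = 1"
  using solution unfolding WH_solution_def WH_constraint_def
  by (simp add: power2_diff algebra_simps)

lemma N2_deriv: "(N2 has_real_derivative (q t + 2 * Sp t + 2 * sqrt 3 * Sm t) * N2 t) (at t)"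
  using solution unfolding WH_solution_def by blast

lemma N3_deriv: "(N3 has_real_derivative (q t + 2 * Sp t - 2 * sqrt 3 * Sm t) * N3 t) (at t)"
  using solution unfolding WH_solution_def by blast

lemma Sm_deriv:
  "(Sm has_real_derivative - (2 - q t) * Sm t - 3 * sqrt 3 / 2 * ((N2 t)\<^sup>2 - (N3 t)\<^sup>2)) (at t)"
proof -
  have "(Sm has_real_derivative - (2 - q t) * Sm t - 3 * WH_Sm 0 (N2 t) (N3 t)) (at t)"
    using solution unfolding WH_solution_def by blast
  then show ?thesis
    by (rule DERIV_cong) (simp add: WH_Sm_def power2_eq_square algebra_simps)
qed

lemma q_nonneg: "0 \<le> q t"
  by (simp add: WH_q_def)

lemma q_le_2: "q t \<le> 2"
  using constraint[of t] zero_le_power2[of "N2 t - N3 t"]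
  unfolding WH_q_def distrib_left by linarith

lemma one_plus_Sp_deriv:
  "((\<lambda>t. 1 + Sp t) has_real_derivative - (2 - q t) * (1 + Sp t)) (at t)"
proof -
  have "(Sp has_real_derivative - (2 - q t) * Sp t - 3 * WH_Sp 0 (N2 t) (N3 t)) (at t)"
    using solution unfolding WH_solution_def by blast
  moreover have "3 * WH_Sp 0 (N2 t) (N3 t) = 2 - q t"
    using constraint[of t] unfolding WH_Sp_def WH_q_def by simp
  ultimately show ?thesis
    by (auto intro!: derivative_eq_intros simp: algebra_simps)
qed

lemma one_plus_Sp_nonneg: "0 \<le> 1 + Sp t"
proof -
  have "(Sp t)\<^sup>2 \<le> 1"
    using constraint[of t] zero_le_power2[of "Sm t"] zero_le_power2[of "N2 t - N3 t"] by linarith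
  then show ?thesis
    by (simp add: abs_square_le_1 abs_le_iff)
qed

lemma Sm_sq_le: "(Sm t)\<^sup>2 \<le> 2 * (1 + Sp t)"
proof -
  have "(Sm t)\<^sup>2 \<le> (1 - Sp t) * (1 + Sp t)"
    using constraint[of t] zero_le_power2[of "N2 t - N3 t"]
    by (simp add: algebra_simps power2_eq_square)
  also have "\<dots> \<le> 2 * (1 + Sp t)"
    using one_plus_Sp_nonneg[of t] by (intro mult_right_mono) auto
  finally show ?thesis .
qed

lemma abs_Sm_le_1: "\<bar>Sm t\<bar> \<le> 1"
proof -
  have "(Sm t)\<^sup>2 \<le> 1"
    using constraint[of t] zero_le_power2[of "Sp t"] zero_le_power2[of "N2 t - N3 t"] by linarith
  then show ?thesis
    by (simp add: abs_square_le_1)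
qed

lemma ln_N2_N3_deriv:
  "((\<lambda>t. ln (N2 t * N3 t)) has_real_derivative 2 * q t + 4 * Sp t) (at t)"
  using N2_pos[of t] N3_pos[of t]
  by (auto intro!: derivative_eq_intros N2_deriv N3_deriv simp: field_simps)

lemma rho_deriv:
  "(rho has_real_derivative 2 * sqrt 3 * Sm t * (1 - (rho t)\<^sup>2)) (at t)"
  unfolding rho_def[abs_def]
proof (rule diff_over_sum_deriv[where u = "q t + 2 * Sp t"])
  show "(N2 has_real_derivative (q t + 2 * Sp t + 2 * sqrt 3 * Sm t) * N2 t) (at t)"
    by (rule N2_deriv)
  show "(N3 has_real_derivative (q t + 2 * Sp t - 2 * sqrt 3 * Sm t) * N3 t) (at t)"
    by (rule N3_deriv)
  show "N2 t + N3 t \<noteq> 0"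
    using N2_pos[of t] N3_pos[of t] by simp
qed

lemma abs_rho_le_1: "\<bar>rho t\<bar> \<le> 1"
  using N2_pos[of t] N3_pos[of t] by (simp add: rho_def abs_divide divide_le_eq_1)

lemma Sm_rho_deriv:
  "((\<lambda>t. Sm t * rho t) has_real_derivative
     - (2 - q t) * (Sm t * rho t) - 3 * sqrt 3 / 2 * (N2 t - N3 t)\<^sup>2
     + 2 * sqrt 3 * (Sm t)\<^sup>2 * (1 - (rho t)\<^sup>2)) (at t)"
proof -
  have key: "rho t * ((N2 t)\<^sup>2 - (N3 t)\<^sup>2) = (N2 t - N3 t)\<^sup>2"
    using N2_pos[of t] N3_pos[of t] by (simp add: rho_def power2_eq_square field_simps)
  have expand: "(- (2 - q t) * Sm t - 3 * sqrt 3 / 2 * ((N2 t)\<^sup>2 - (N3 t)\<^sup>2)) * rho t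
      + 2 * sqrt 3 * Sm t * (1 - (rho t)\<^sup>2) * Sm t
      = - (2 - q t) * (Sm t * rho t) - 3 * sqrt 3 / 2 * (rho t * ((N2 t)\<^sup>2 - (N3 t)\<^sup>2))
      + 2 * sqrt 3 * (Sm t)\<^sup>2 * (1 - (rho t)\<^sup>2)"
    by (simp add: field_simps power2_eq_square)
  show ?thesis
    using DERIV_mult[OF Sm_deriv[of t] rho_deriv[of t]] unfolding expand key .
qed

lemma sqrt_one_plus_Sp_deriv:
  assumes "0 < 1 + Sp t"
  shows "((\<lambda>t. sqrt (1 + Sp t)) has_real_derivative - (2 - q t) / 2 * sqrt (1 + Sp t)) (at t)"
  using assms
  by (auto intro!: DERIV_cong[OF DERIV_real_sqrt[THEN DERIV_chain2, OF assms one_plus_Sp_deriv]]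
      simp: field_simps real_div_sqrt)

lemma one_plus_Sp_pos:
  assumes "0 < 1 + Sp 0" and "0 \<le> t"
  shows "0 < 1 + Sp t"
proof -
  have "(1 + Sp 0) * exp (- 2 * t) \<le> 1 + Sp t"
    using nonneg_linear_ode_exp_lower_bound[of "\<lambda>t. 1 + Sp t" "\<lambda>t. - (2 - q t)" 2 t]
      one_plus_Sp_deriv one_plus_Sp_nonneg q_nonneg \<open>0 \<le> t\<close> by simp
  moreover have "0 < (1 + Sp 0) * exp (- 2 * t)"
    using assms(1) by simp
  ultimately show ?thesis
    by linarith
qed

lemma Sp_eq_minus_1:
  assumes "1 + Sp 0 = 0" and "0 \<le> t"
  shows "Sp t = - 1"
proof -
  have "1 + Sp t \<le> 1 + Sp 0"
  proof (rule DERIV_nonpos_imp_nonincreasing[OF \<open>0 \<le> t\<close>])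
    fix s
    show "\<exists>y. ((\<lambda>t. 1 + Sp t) has_real_derivative y) (at s) \<and> y \<le> 0"
      using one_plus_Sp_deriv[of s] one_plus_Sp_nonneg[of s] q_le_2[of s]
      by (intro exI conjI) (auto intro: mult_nonpos_nonneg)
  qed
  then show ?thesis
    using assms(1) one_plus_Sp_nonneg[of t] by linarith
qed

lemma abs_Sm_rho_le: "\<bar>Sm t * rho t\<bar> \<le> sqrt 3 * sqrt (1 + Sp t)"
proof -
  have "\<bar>Sm t * rho t\<bar> \<le> \<bar>Sm t\<bar>"
    using abs_rho_le_1[of t] by (simp add: abs_mult mult_left_le)
  also have "\<dots> = sqrt ((Sm t)\<^sup>2)"
    by simp
  also have "\<dots> \<le> sqrt (3 * (1 + Sp t))"
    by (rule real_sqrt_le_mono)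
      (use Sm_sq_le[of t] one_plus_Sp_nonneg[of t] in \<open>unfold distrib_left, linarith\<close>)
  finally show ?thesis
    by (simp only: real_sqrt_mult)
qed

definition lyapunov :: "real \<Rightarrow> real" where
  "lyapunov t = ln (N2 t * N3 t) - Sm t * rho t / sqrt 3 - 2 * sqrt (1 + Sp t)"

lemma lyapunov_deriv:
  assumes "0 < 1 + Sp t"
  shows "(lyapunov has_real_derivative
           2 * (1 + Sp t)\<^sup>2 + 2 * (Sm t * rho t)\<^sup>2
           + (2 - q t) * (Sm t * rho t / sqrt 3 + sqrt (1 + Sp t))) (at t)"
proof -
  have D_eq: "(N2 t - N3 t)\<^sup>2 = 4/3 * (1 - (Sp t)\<^sup>2 - (Sm t)\<^sup>2)"
    using constraint[of t] by simp
  have sqrt3: "sqrt 3 * (sqrt 3 * x) = 3 * x" for x :: real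
    by (simp flip: mult.assoc)
  show ?thesis
    unfolding lyapunov_def[abs_def]
    by (rule DERIV_cong[OF DERIV_diff[OF DERIV_diff[OF ln_N2_N3_deriv DERIV_cdivide[OF Sm_rho_deriv]]
          DERIV_cmult[OF sqrt_one_plus_Sp_deriv[OF assms]]]])
      (simp only: D_eq, simp add: WH_q_def field_simps power2_eq_square sqrt3)
qed

lemma lyapunov_deriv_nonneg:
  assumes "0 < 1 + Sp t"
  shows "0 \<le> 2 * (1 + Sp t)\<^sup>2 + 2 * (Sm t * rho t)\<^sup>2
           + (2 - q t) * (Sm t * rho t / sqrt 3 + sqrt (1 + Sp t))"
proof -
  have "- (Sm t * rho t) \<le> sqrt 3 * sqrt (1 + Sp t)"
    using abs_Sm_rho_le[of t] by (simp add: abs_le_iff)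
  then have "0 \<le> Sm t * rho t / sqrt 3 + sqrt (1 + Sp t)"
    by (simp add: field_simps)
  moreover have "0 \<le> 2 - q t"
    using q_le_2[of t] by simp
  ultimately show ?thesis
    by simp
qed

lemma lyapunov_mono:
  assumes "0 < 1 + Sp 0" and "0 \<le> t"
  shows "lyapunov 0 \<le> lyapunov t"
proof (rule DERIV_nonneg_imp_nondecreasing[OF \<open>0 \<le> t\<close>])
  fix s :: real
  assume "0 \<le> s"
  then have "0 < 1 + Sp s"
    using one_plus_Sp_pos assms(1) by blast
  then show "\<exists>y. (lyapunov has_real_derivative y) (at s) \<and> 0 \<le> y"
    using lyapunov_deriv lyapunov_deriv_nonneg by blast
qed

lemma ln_N2_N3_ge_lyapunov:
  assumes "0 < 1 + Sp 0" and "0 \<le> t"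
  shows "lyapunov 0 - 1 \<le> ln (N2 t * N3 t)"
proof -
  have "\<bar>Sm t * rho t\<bar> \<le> 1"
    using abs_Sm_le_1[of t] abs_rho_le_1[of t] by (simp add: abs_mult mult_le_one)
  moreover have "1 \<le> sqrt (3::real)"
    by simp
  ultimately have "- (Sm t * rho t) \<le> sqrt 3"
    using abs_ge_minus_self[of "Sm t * rho t"] by linarith
  then have "- (Sm t * rho t / sqrt 3) \<le> 1"
    by (simp add: field_simps)
  moreover have "0 \<le> sqrt (1 + Sp t)"
    using one_plus_Sp_nonneg[of t] by simp
  ultimately have "lyapunov t \<le> ln (N2 t * N3 t) + 1"
    unfolding lyapunov_def by linarith
  then show ?thesis
    using lyapunov_mono[OF assms] by linarith
qed

lemma ln_N2_N3_ge_initial: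
  assumes "1 + Sp 0 = 0" and "0 \<le> t"
  shows "ln (N2 0 * N3 0) \<le> ln (N2 t * N3 t)"
proof (rule DERIV_nonneg_imp_nondecreasing[OF \<open>0 \<le> t\<close>])
  fix s :: real
  assume "0 \<le> s"
  then have "Sp s = - 1"
    using Sp_eq_minus_1 assms(1) by blast
  moreover have "Sm s = 0"
    using Sm_sq_le[of s] \<open>Sp s = - 1\<close> by simp
  ultimately show "\<exists>y. ((\<lambda>t. ln (N2 t * N3 t)) has_real_derivative y) (at s) \<and> 0 \<le> y"
    using ln_N2_N3_deriv[of s] by (auto simp: WH_q_def)
qed

lemma ln_N2_N3_bounded_below: "\<exists>L. \<forall>t\<ge>0. L \<le> ln (N2 t * N3 t)"
proof (cases "1 + Sp 0 = 0")
  case True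
  then show ?thesis
    using ln_N2_N3_ge_initial by blast
next
  case False
  then have "0 < 1 + Sp 0"
    using one_plus_Sp_nonneg[of 0] by linarith
  then show ?thesis
    using ln_N2_N3_ge_lyapunov by blast
qed

end

theorem mainTheorem10:
  fixes N1 N2 N3 Sp Sm :: "real \<Rightarrow> real"
  assumes "WH_solution N1 N2 N3 Sp Sm"
    and "\<forall>t. N1 t = 0"
    and "\<forall>t. N2 t > 0"
    and "\<forall>t. N3 t > 0"
  shows "\<exists>c>0. \<forall>t\<ge>0. N2 t * N3 t \<ge> c"
proof -
  have "N1 = (\<lambda>_. 0)"
    using assms(2) by blast
  with assms interpret WH_type_VII0 N2 N3 Sp Sm
    by unfold_locales auto
  obtain L where L: "\<And>t. 0 \<le> t \<Longrightarrow> L \<le> ln (N2 t * N3 t)"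
    using ln_N2_N3_bounded_below by blast
  have "exp L \<le> N2 t * N3 t" if "0 \<le> t" for t
    using L[OF that] N2_pos[of t] N3_pos[of t] by (simp add: ln_ge_iff)
  then show ?thesis
    by (intro exI[of _ "exp L"]) auto
qed

end
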